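(* Let $x,y\in\ell^\infty$ with $|L_x|=n$ and $|L_y|=k$ for some integers $n,k\ge 2$. Then there exist $z_1,z_2\in\operatorname{span}\{x,y\}$ with $$|L_{z_1}|=|\mathcal{E}_{x,y}|\quad\text{and}\quad |L_{z_2}|<|\mathcal{E}_{x,y}|,$$ and moreover $$|\mathcal{E}_{x,y}|=\max\{|L_z|: z\in\operatorname{span}\{x,y\}\}.$$
   Context: $\ell^\infty$ is the Banach space of bounded real sequences $x=(x_n)_{n\ge1}$ with the sup norm. For $x\in\ell^\infty$, $L_x$ denotes the (non-empty compact) set of accumulation points of $x$, i.e. the set of $a\in\mathbb{R}$ such that $x_{n_k}\to a$ for some strictly increasing sequence $(n_k)$. For $S\subset\mathbb{N}$, $1_S$ is the indicator sequence of $S$; $x\sim_{c_0}y$ means $x-y$ converges to $0$. If $|L_x|=n<\infty$, one can write $x\sim_{c_0}\xi_11_{S_1}+\dots+\xi_n1_{S_n}$ where $S_1,\dots,S_n$ is a partition of $\mathbb{N}$ into infinite sets and $\xi_1,\dots,\xi_n$ are the distinct accumulation points; similarly $y\sim_{c_0}\eta_11_{T_1}+\dots+\eta_k1_{T_k}$. Then $\mathcal{E}_{x,y}=\{(i,j)\in\{1,\dots,n\}\times\{1,\dots,k\}: S_i\cap T_j\text{ is infinite}\}$ (this does not depend on the choice of the partitions, which are determined up to finite modifications). *)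

theory Defs
  imports "HOL-Analysis.Analysis"
begin

definition linf :: "(nat \<Rightarrow> real) set" where
  "linf = {x. bounded (range x)}"

definition acc_points :: "(nat \<Rightarrow> real) \<Rightarrow> real set" where
  "acc_points x = {a. \<exists>r. strict_mono r \<and> (x \<circ> r) \<longlonglongrightarrow> a}"

definition c0_decomp :: "(nat \<Rightarrow> real) \<Rightarrow> (real \<Rightarrow> nat set) \<Rightarrow> bool" where
  "c0_decomp x S \<longleftrightarrow>
     (\<forall>\<xi>\<in>acc_points x. infinite (S \<xi>)) \<and>
     (\<forall>\<xi>\<in>acc_points x. \<forall>\<eta>\<in>acc_points x. \<xi> \<noteq> \<eta> \<longrightarrow> S \<xi> \<inter> S \<eta> = {}) \<and>
     (\<Union>\<xi>\<in>acc_points x. S \<xi>) = UNIV \<and>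
     (\<lambda>m. x m - (\<Sum>\<xi>\<in>acc_points x. if m \<in> S \<xi> then \<xi> else 0)) \<longlonglongrightarrow> 0"

text \<open>E_{x,y}, indexed by pairs of accumulation points (xi_i, eta_j) instead of index pairs (i,j).\<close>
definition E_set :: "(nat \<Rightarrow> real) \<Rightarrow> (nat \<Rightarrow> real) \<Rightarrow> (real \<times> real) set" where
  "E_set x y = (let S = (SOME S. c0_decomp x S); T = (SOME T. c0_decomp y T) in
     {(\<xi>, \<eta>). \<xi> \<in> acc_points x \<and> \<eta> \<in> acc_points y \<and> infinite (S \<xi> \<inter> T \<eta>)})"

definition span2 :: "(nat \<Rightarrow> real) \<Rightarrow> (nat \<Rightarrow> real) \<Rightarrow> (nat \<Rightarrow> real) set" where
  "span2 x y = {(\<lambda>m. a * x m + b * y m) | a b. True}"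

end

theory Submission
  imports Defs
begin

text \<open>
  Along the infinite cells \<open>S \<xi> \<inter> T \<eta>\<close> of the common refinement of the two partitions, every
  \<open>z = a x + b y\<close> converges to \<open>a \<xi> + b \<eta>\<close>, and every subsequence of \<open>z\<close> has a further
  subsequence inside one such cell; hence \<open>L\<^sub>z\<close> is the image of \<open>\<E>\<^sub>x\<^sub>,\<^sub>y\<close> under
  \<open>(\<xi>, \<eta>) \<mapsto> a \<xi> + b \<eta>\<close>. This image has at most \<open>|\<E>\<^sub>x\<^sub>,\<^sub>y|\<close> points, exactly that many when
  \<open>a = 1\<close> and \<open>b\<close> avoids the finitely many slopes \<open>(\<xi>' - \<xi>) / (\<eta> - \<eta>')\<close>, and only one when
  \<open>a = b = 0\<close>, while \<open>|\<E>\<^sub>x\<^sub>,\<^sub>y| \<ge> |L\<^sub>x| \<ge> 2\<close>.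
\<close>

lemma acc_pointsI: "strict_mono r \<Longrightarrow> (x \<circ> r) \<longlonglongrightarrow> l \<Longrightarrow> l \<in> acc_points x"
  unfolding acc_points_def by blast

lemma infinite_image_strict_mono:
  fixes r :: "nat \<Rightarrow> nat"
  assumes "strict_mono r" and "infinite J"
  shows "infinite (r ` J)"
  using strict_mono_imp_inj_on[OF assms(1)] finite_imageD assms(2) by blast

lemma finite_cover_has_infinite_piece:
  fixes B :: "'a \<Rightarrow> nat set"
  assumes "finite P" and "(\<Union>p\<in>P. B p) = UNIV"
  obtains p where "p \<in> P" and "infinite (B p)"
proof -
  have "infinite (\<Union>p\<in>P. B p)" using assms(2) by simp
  then show thesis using that finite_UN[OF assms(1)] by blast
qed

lemma bounded_infinite_subseq_convergent:
  fixes x :: "nat \<Rightarrow> real"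
  assumes "bounded (range x)" and "infinite J"
  obtains r l where "strict_mono r" "\<And>i. r i \<in> J" "(x \<circ> r) \<longlonglongrightarrow> l"
proof -
  obtain q :: "nat \<Rightarrow> nat" where q: "strict_mono q" "\<And>i. q i \<in> J"
    using infinite_enumerate[OF assms(2)] by blast
  have "bounded (range (x \<circ> q))" using assms(1) by (rule bounded_subset) auto
  then obtain l q' where "strict_mono q'" "((x \<circ> q) \<circ> q') \<longlonglongrightarrow> l"
    using bounded_imp_convergent_subsequence by blast
  with q show thesis by (intro that[of "q \<circ> q'" l]) (auto simp: strict_mono_o o_assoc)
qed

lemma tendsto_diff_nearest_acc_point:
  fixes x :: "nat \<Rightarrow> real"
  assumes b: "bounded (range x)" and f: "\<And>m. f m \<in> acc_points x"
    and nearest: "\<And>m \<eta>. \<eta> \<in> acc_points x \<Longrightarrow> \<bar>x m - f m\<bar> \<le> \<bar>x m - \<eta>\<bar>"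
  shows "(\<lambda>m. x m - f m) \<longlonglongrightarrow> 0"
proof (rule ccontr)
  assume "\<not> ?thesis"
  then obtain e where e: "e > 0" "\<forall>N. \<exists>m\<ge>N. \<not> \<bar>x m - f m\<bar> < e"
    unfolding LIMSEQ_def by (auto simp: dist_real_def)
  define J where "J = {m. \<bar>x m - f m\<bar> \<ge> e}"
  have "infinite J"
    unfolding infinite_nat_iff_unbounded_le J_def using e(2) by (auto simp: not_less)
  then obtain r l where r: "strict_mono r" "\<And>i. r i \<in> J" "(x \<circ> r) \<longlonglongrightarrow> l"
    using bounded_infinite_subseq_convergent[OF b] by blast
  have "l \<in> acc_points x" using r(1,3) by (rule acc_pointsI)
  obtain N where "\<bar>x (r N) - l\<bar> < e"
    using r(3) e(1) unfolding LIMSEQ_def by (auto simp: dist_real_def)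
  with nearest[OF \<open>l \<in> acc_points x\<close>, of "r N"] r(2)[of N] show False
    unfolding J_def by simp
qed

text \<open>Near \<open>\<xi>\<close> (closer than half the gap to the other accumulation points) \<open>\<xi>\<close> is the unique
  nearest accumulation point, and a subsequence tending to \<open>\<xi>\<close> eventually stays there.\<close>
lemma infinite_nearest_acc_point_cell:
  fixes x :: "nat \<Rightarrow> real"
  assumes fin: "finite (acc_points x)" and xi: "\<xi> \<in> acc_points x"
    and f: "\<And>m. f m \<in> acc_points x"
    and nearest: "\<And>m \<eta>. \<eta> \<in> acc_points x \<Longrightarrow> \<bar>x m - f m\<bar> \<le> \<bar>x m - \<eta>\<bar>"
  shows "infinite {m. f m = \<xi>}"
proof -
  let ?L = "acc_points x - {\<xi>}"
  obtain r where r: "strict_mono r" "(x \<circ> r) \<longlonglongrightarrow> \<xi>" using xi unfolding acc_points_def by blast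
  have "\<forall>\<^sub>F j in sequentially. \<forall>\<eta>\<in>?L. \<bar>x (r j) - \<xi>\<bar> < \<bar>\<xi> - \<eta>\<bar> / 2"
  proof (rule eventually_ball_finite)
    show "\<forall>\<eta>\<in>?L. \<forall>\<^sub>F j in sequentially. \<bar>x (r j) - \<xi>\<bar> < \<bar>\<xi> - \<eta>\<bar> / 2"
    proof
      fix \<eta> assume "\<eta> \<in> ?L"
      then have "\<bar>\<xi> - \<eta>\<bar> / 2 > 0" by auto
      from r(2)[unfolded tendsto_iff, rule_format, OF this]
      show "\<forall>\<^sub>F j in sequentially. \<bar>x (r j) - \<xi>\<bar> < \<bar>\<xi> - \<eta>\<bar> / 2"
        by (simp add: dist_real_def)
    qed
  qed (use fin in simp)
  then obtain N where N: "\<And>j \<eta>. j \<ge> N \<Longrightarrow> \<eta> \<in> ?L \<Longrightarrow> \<bar>x (r j) - \<xi>\<bar> < \<bar>\<xi> - \<eta>\<bar> / 2"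
    unfolding eventually_sequentially by blast
  have "f (r j) = \<xi>" if "j \<ge> N" for j
  proof (rule ccontr)
    assume "f (r j) \<noteq> \<xi>"
    then have close: "\<bar>x (r j) - \<xi>\<bar> < \<bar>\<xi> - f (r j)\<bar> / 2" using N[OF that] f by blast
    have "\<bar>\<xi> - f (r j)\<bar> \<le> \<bar>x (r j) - \<xi>\<bar> + \<bar>x (r j) - f (r j)\<bar>"
      using abs_triangle_ineq[of "\<xi> - x (r j)" "x (r j) - f (r j)"] by (simp add: abs_minus_commute)
    also have "\<dots> \<le> \<bar>x (r j) - \<xi>\<bar> + \<bar>x (r j) - \<xi>\<bar>"
      using nearest[OF xi] by (rule add_left_mono)
    also have "\<dots> < \<bar>\<xi> - f (r j)\<bar>" using close by (simp add: field_simps)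
    finally show False by simp
  qed
  then have "r ` {N..} \<subseteq> {m. f m = \<xi>}" by auto
  moreover have "infinite (r ` {N..})" using r(1) infinite_Ici by (rule infinite_image_strict_mono)
  ultimately show ?thesis using finite_subset by blast
qed

lemma c0_decomp_exists:
  fixes x :: "nat \<Rightarrow> real"
  assumes b: "bounded (range x)" and fin: "finite (acc_points x)" and ne: "acc_points x \<noteq> {}"
  shows "\<exists>S. c0_decomp x S"
proof -
  have "\<exists>\<xi>\<in>acc_points x. \<forall>\<eta>\<in>acc_points x. \<bar>x m - \<xi>\<bar> \<le> \<bar>x m - \<eta>\<bar>" for m
  proof -
    obtain \<xi> where "\<xi> \<in> acc_points x" "\<And>\<eta>. \<eta> \<in> acc_points x \<Longrightarrow> dist (x m) \<xi> \<le> dist (x m) \<eta>"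
      using distance_attains_inf[OF finite_imp_closed[OF fin] ne] by blast
    then show ?thesis by (auto simp: dist_real_def)
  qed
  then obtain f where f: "\<And>m. f m \<in> acc_points x"
    and nearest: "\<And>m \<eta>. \<eta> \<in> acc_points x \<Longrightarrow> \<bar>x m - f m\<bar> \<le> \<bar>x m - \<eta>\<bar>"
    by metis
  define S where "S = (\<lambda>\<xi>. {m. f m = \<xi>})"
  have sum_eq: "(\<Sum>\<xi>\<in>acc_points x. if m \<in> S \<xi> then \<xi> else 0) = f m" for m
    using fin f[of m] by (simp add: S_def sum.delta)
  have "c0_decomp x S"
    unfolding c0_decomp_def
  proof (intro conjI)
    show "\<forall>\<xi>\<in>acc_points x. infinite (S \<xi>)"
      unfolding S_def using infinite_nearest_acc_point_cell[OF fin _ f nearest] by blast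
    show "\<forall>\<xi>\<in>acc_points x. \<forall>\<eta>\<in>acc_points x. \<xi> \<noteq> \<eta> \<longrightarrow> S \<xi> \<inter> S \<eta> = {}"
      by (auto simp: S_def)
    show "(\<Union>\<xi>\<in>acc_points x. S \<xi>) = UNIV" using f by (auto simp: S_def)
    show "(\<lambda>m. x m - (\<Sum>\<xi>\<in>acc_points x. if m \<in> S \<xi> then \<xi> else 0)) \<longlonglongrightarrow> 0"
      using tendsto_diff_nearest_acc_point[OF b f nearest] by (simp add: sum_eq)
  qed
  then show ?thesis by blast
qed

lemma c0_decomp_some:
  assumes "x \<in> linf" and "finite (acc_points x)" and "acc_points x \<noteq> {}"
  shows "c0_decomp x (SOME S. c0_decomp x S)"
proof -
  have "\<exists>S. c0_decomp x S" using assms by (intro c0_decomp_exists) (simp_all add: linf_def)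
  then show ?thesis by (rule someI_ex)
qed

lemma c0_decomp_tendsto_on_cell:
  assumes d: "c0_decomp x S" and fin: "finite (acc_points x)"
    and xi: "\<xi> \<in> acc_points x" and q: "strict_mono q" and qS: "\<And>i. q i \<in> S \<xi>"
  shows "(x \<circ> q) \<longlonglongrightarrow> \<xi>"
proof -
  let ?s = "\<lambda>m. (\<Sum>\<xi>\<in>acc_points x. if m \<in> S \<xi> then \<xi> else 0)"
  have "(\<lambda>m. x m - ?s m) \<longlonglongrightarrow> 0" using d unfolding c0_decomp_def by blast
  from LIMSEQ_subseq_LIMSEQ[OF this q] have lim: "(\<lambda>i. x (q i) - ?s (q i)) \<longlonglongrightarrow> 0"
    by (simp add: o_def)
  have "?s (q i) = \<xi>" for i
  proof -
    have "?s (q i) = (\<Sum>\<xi>'\<in>acc_points x. if \<xi>' = \<xi> then \<xi>' else 0)"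
    proof (rule sum.cong)
      fix \<xi>' assume "\<xi>' \<in> acc_points x"
      then have "q i \<in> S \<xi>' \<longleftrightarrow> \<xi>' = \<xi>" using d xi qS[of i] unfolding c0_decomp_def by blast
      then show "(if q i \<in> S \<xi>' then \<xi>' else 0) = (if \<xi>' = \<xi> then \<xi>' else 0)" by simp
    qed simp
    also have "\<dots> = \<xi>" using fin xi by simp
    finally show ?thesis .
  qed
  with lim have "(\<lambda>i. (x (q i) - \<xi>) + \<xi>) \<longlonglongrightarrow> 0 + \<xi>" by (intro tendsto_add) auto
  then show ?thesis by (simp add: o_def)
qed

definition cell_pairs ::
    "(nat \<Rightarrow> real) \<Rightarrow> (real \<Rightarrow> nat set) \<Rightarrow> (nat \<Rightarrow> real) \<Rightarrow> (real \<Rightarrow> nat set) \<Rightarrow> (real \<times> real) set"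
  where "cell_pairs x S y T =
    {(\<xi>, \<eta>). \<xi> \<in> acc_points x \<and> \<eta> \<in> acc_points y \<and> infinite (S \<xi> \<inter> T \<eta>)}"

lemma E_set_eq_cell_pairs: "E_set x y = cell_pairs x (SOME S. c0_decomp x S) y (SOME T. c0_decomp y T)"
  unfolding E_set_def cell_pairs_def Let_def ..

lemma finite_E_set: "finite (acc_points x) \<Longrightarrow> finite (acc_points y) \<Longrightarrow> finite (E_set x y)"
  unfolding E_set_eq_cell_pairs
  by (rule finite_subset[of _ "acc_points x \<times> acc_points y"]) (auto simp: cell_pairs_def)

lemma acc_points_subset_fst_cell_pairs:
  assumes dx: "c0_decomp x S" and dy: "c0_decomp y T" and fy: "finite (acc_points y)"
  shows "acc_points x \<subseteq> fst ` cell_pairs x S y T"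
proof
  fix \<xi> assume xi: "\<xi> \<in> acc_points x"
  have "(\<Union>\<eta>\<in>acc_points y. S \<xi> \<inter> T \<eta>) = S \<xi>" using dy unfolding c0_decomp_def by blast
  moreover have "infinite (S \<xi>)" using dx xi unfolding c0_decomp_def by blast
  ultimately have "infinite (\<Union>\<eta>\<in>acc_points y. S \<xi> \<inter> T \<eta>)" by simp
  then obtain \<eta> where "\<eta> \<in> acc_points y" "infinite (S \<xi> \<inter> T \<eta>)"
    using finite_UN[OF fy] by blast
  with xi show "\<xi> \<in> fst ` cell_pairs x S y T" by (force simp: cell_pairs_def)
qed

lemma tendsto_lincomb_on_cell:
  assumes dx: "c0_decomp x S" and dy: "c0_decomp y T"
    and fx: "finite (acc_points x)" and fy: "finite (acc_points y)"
    and xi: "\<xi> \<in> acc_points x" and eta: "\<eta> \<in> acc_points y"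
    and q: "strict_mono q" and qST: "\<And>i. q i \<in> S \<xi> \<inter> T \<eta>"
  shows "((\<lambda>m. a * x m + b * y m) \<circ> q) \<longlonglongrightarrow> a * \<xi> + b * \<eta>"
proof -
  have "(x \<circ> q) \<longlonglongrightarrow> \<xi>" using c0_decomp_tendsto_on_cell[OF dx fx xi q] qST by blast
  moreover have "(y \<circ> q) \<longlonglongrightarrow> \<eta>" using c0_decomp_tendsto_on_cell[OF dy fy eta q] qST by blast
  ultimately have "(\<lambda>i. a * (x \<circ> q) i + b * (y \<circ> q) i) \<longlonglongrightarrow> a * \<xi> + b * \<eta>"
    by (intro tendsto_intros)
  then show ?thesis by (simp add: o_def)
qed

lemma acc_points_lincomb:
  assumes dx: "c0_decomp x S" and dy: "c0_decomp y T"
    and fx: "finite (acc_points x)" and fy: "finite (acc_points y)"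
  shows "acc_points (\<lambda>m. a * x m + b * y m) = (\<lambda>(\<xi>, \<eta>). a * \<xi> + b * \<eta>) ` cell_pairs x S y T"
    (is "acc_points ?z = ?f ` ?E")
proof
  show "?f ` ?E \<subseteq> acc_points ?z"
  proof
    fix c assume "c \<in> ?f ` ?E"
    then obtain \<xi> \<eta> where p: "\<xi> \<in> acc_points x" "\<eta> \<in> acc_points y" "infinite (S \<xi> \<inter> T \<eta>)"
      and c: "c = a * \<xi> + b * \<eta>" by (auto simp: cell_pairs_def)
    obtain q :: "nat \<Rightarrow> nat" where "strict_mono q" "\<And>i. q i \<in> S \<xi> \<inter> T \<eta>"
      using infinite_enumerate[OF p(3)] by blast
    then show "c \<in> acc_points ?z"
      unfolding c by (intro acc_pointsI tendsto_lincomb_on_cell[OF dx dy fx fy p(1,2)])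
  qed
next
  show "acc_points ?z \<subseteq> ?f ` ?E"
  proof
    fix c assume "c \<in> acc_points ?z"
    then obtain r where r: "strict_mono r" "(?z \<circ> r) \<longlonglongrightarrow> c" unfolding acc_points_def by blast
    have "r j \<in> (\<Union>\<xi>\<in>acc_points x. S \<xi>)" "r j \<in> (\<Union>\<eta>\<in>acc_points y. T \<eta>)" for j
      using dx dy unfolding c0_decomp_def by simp_all
    then have "(\<Union>p\<in>acc_points x \<times> acc_points y. {j. r j \<in> S (fst p) \<inter> T (snd p)}) = UNIV"
      by (auto 0 3)
    then obtain p where "p \<in> acc_points x \<times> acc_points y"
      and "infinite {j. r j \<in> S (fst p) \<inter> T (snd p)}"
      using finite_cover_has_infinite_piece finite_cartesian_product[OF fx fy] by blast
    then obtain \<xi> \<eta> where p: "\<xi> \<in> acc_points x" "\<eta> \<in> acc_points y"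
      and J: "infinite {j. r j \<in> S \<xi> \<inter> T \<eta>}"
      by (cases p) auto
    then obtain s :: "nat \<Rightarrow> nat" where s: "strict_mono s" "\<And>i. r (s i) \<in> S \<xi> \<inter> T \<eta>"
      using infinite_enumerate by blast
    have "(?z \<circ> (r \<circ> s)) \<longlonglongrightarrow> c"
      using LIMSEQ_subseq_LIMSEQ[OF r(2) s(1)] by (simp add: o_assoc)
    moreover have "(?z \<circ> (r \<circ> s)) \<longlonglongrightarrow> a * \<xi> + b * \<eta>"
      using s by (intro tendsto_lincomb_on_cell[OF dx dy fx fy p] strict_mono_o r(1)) auto
    ultimately have c: "c = a * \<xi> + b * \<eta>" by (rule LIMSEQ_unique)
    have "r ` {j. r j \<in> S \<xi> \<inter> T \<eta>} \<subseteq> S \<xi> \<inter> T \<eta>" by blast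
    then have "infinite (S \<xi> \<inter> T \<eta>)"
      using infinite_image_strict_mono[OF r(1) J] finite_subset by blast
    with p have "(\<xi>, \<eta>) \<in> ?E" by (simp add: cell_pairs_def)
    then show "c \<in> ?f ` ?E" unfolding c by (rule rev_image_eqI) simp
  qed
qed

lemma acc_points_lincomb_E_set:
  assumes x: "x \<in> linf" and y: "y \<in> linf" and fx: "finite (acc_points x)" and fy: "finite (acc_points y)"
    and nex: "acc_points x \<noteq> {}" and ney: "acc_points y \<noteq> {}"
  shows "acc_points (\<lambda>m. a * x m + b * y m) = (\<lambda>(\<xi>, \<eta>). a * \<xi> + b * \<eta>) ` E_set x y"
  unfolding E_set_eq_cell_pairs
  using acc_points_lincomb[OF c0_decomp_some[OF x fx nex] c0_decomp_some[OF y fy ney] fx fy] .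

lemma card_acc_points_le_card_E_set:
  assumes x: "x \<in> linf" and y: "y \<in> linf" and fx: "finite (acc_points x)" and fy: "finite (acc_points y)"
    and nex: "acc_points x \<noteq> {}" and ney: "acc_points y \<noteq> {}"
  shows "card (acc_points x) \<le> card (E_set x y)"
proof -
  have "acc_points x \<subseteq> fst ` E_set x y"
    unfolding E_set_eq_cell_pairs
    using acc_points_subset_fst_cell_pairs[OF c0_decomp_some[OF x fx nex] c0_decomp_some[OF y fy ney] fy] .
  then have "card (acc_points x) \<le> card (fst ` E_set x y)"
    using finite_E_set[OF fx fy] by (intro card_mono) auto
  also have "\<dots> \<le> card (E_set x y)" using finite_E_set[OF fx fy] by (rule card_image_le)
  finally show ?thesis .
qed

lemma finite_pairs_inj_on_slope:
  fixes E :: "(real \<times> real) set"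
  assumes "finite E"
  obtains b where "inj_on (\<lambda>(\<xi>, \<eta>). \<xi> + b * \<eta>) E"
proof -
  define B where "B = (\<lambda>((\<xi>, \<eta>), (\<xi>', \<eta>')). (\<xi>' - \<xi>) / (\<eta> - \<eta>')) ` (E \<times> E)"
  have "finite B" unfolding B_def using assms by simp
  then obtain b where b: "b \<notin> B" using ex_new_if_finite[OF infinite_UNIV_char_0] by blast
  have "inj_on (\<lambda>(\<xi>, \<eta>). \<xi> + b * \<eta>) E"
  proof (rule inj_onI, clarify)
    fix \<xi> \<eta> \<xi>' \<eta>' assume E: "(\<xi>, \<eta>) \<in> E" "(\<xi>', \<eta>') \<in> E" and eq: "\<xi> + b * \<eta> = \<xi>' + b * \<eta>'"
    show "\<xi> = \<xi>' \<and> \<eta> = \<eta>'"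
    proof (cases "\<eta> = \<eta>'")
      case False
      with eq have "b = (\<xi>' - \<xi>) / (\<eta> - \<eta>')" by (simp add: field_simps)
      with E have "b \<in> B" unfolding B_def by force
      with b show ?thesis by blast
    qed (use eq in simp)
  qed
  then show thesis by (rule that)
qed

theorem lemma2p1:
  fixes x y :: "nat \<Rightarrow> real" and n k :: nat
  assumes "x \<in> linf" and "y \<in> linf"
    and "finite (acc_points x)" and "card (acc_points x) = n"
    and "finite (acc_points y)" and "card (acc_points y) = k"
    and "n \<ge> 2" and "k \<ge> 2"
  shows "(\<exists>z1\<in>span2 x y. \<exists>z2\<in>span2 x y.
           finite (acc_points z1) \<and> card (acc_points z1) = card (E_set x y) \<and>
           finite (acc_points z2) \<and> card (acc_points z2) < card (E_set x y)) \<and>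
         card (E_set x y) = Max {card (acc_points z) | z. z \<in> span2 x y}"
proof -
  have ne: "acc_points x \<noteq> {}" "acc_points y \<noteq> {}" using assms(4,6-8) by auto
  define E where "E = E_set x y"
  have acc: "acc_points (\<lambda>m. a * x m + b * y m) = (\<lambda>(\<xi>, \<eta>). a * \<xi> + b * \<eta>) ` E" for a b
    unfolding E_def using assms(1,2,3,5) ne by (rule acc_points_lincomb_E_set)
  have finE: "finite E" unfolding E_def using assms(3,5) by (rule finite_E_set)
  have "2 \<le> card E"
    using card_acc_points_le_card_E_set[OF assms(1,2,3,5) ne] assms(4,7) unfolding E_def by simp
  have bound: "finite (acc_points z) \<and> card (acc_points z) \<le> card E" if "z \<in> span2 x y" for z
    using that finE by (auto simp: span2_def acc card_image_le)
  have span: "(\<lambda>m. a * x m + b * y m) \<in> span2 x y" for a b by (auto simp: span2_def)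
  obtain b where "inj_on (\<lambda>(\<xi>, \<eta>). \<xi> + b * \<eta>) E" using finite_pairs_inj_on_slope[OF finE] .
  then have z1: "card (acc_points (\<lambda>m. 1 * x m + b * y m)) = card E"
    unfolding acc by (simp add: card_image)
  have "E \<noteq> {}" using \<open>2 \<le> card E\<close> by auto
  then have "acc_points (\<lambda>m. 0 * x m + 0 * y m) = {0}" unfolding acc by auto
  with \<open>2 \<le> card E\<close> have z2: "card (acc_points (\<lambda>m. 0 * x m + 0 * y m)) < card E" by simp
  have "Max {card (acc_points z) | z. z \<in> span2 x y} = card E"
  proof (rule Max_eqI)
    show "finite {card (acc_points z) | z. z \<in> span2 x y}"
      by (rule finite_subset[of _ "{..card E}"]) (auto dest: bound)
    show "card E \<in> {card (acc_points z) | z. z \<in> span2 x y}"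
      using z1[symmetric] span[of 1 b] by blast
  qed (use bound in auto)
  then show ?thesis using z1 z2 span bound unfolding E_def by metis
qed

end
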